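(* Let $\epsilon>0$, $k\ge 1$, and let $\mathcal{R}$ be any collection of RR sets such that $|n\,\mathcal{F_R}(u)-I_u|\le\frac{\epsilon n}{4}$ for all $u\in V$. Then: (1) if $I_u\ge I^k$, then $n\,\mathcal{F_R}(u)\ge n\,\mathcal{F_R}^k-\frac{\epsilon n}{2}$; and (2) if $I_u\le I^k-\epsilon n$, then $n\,\mathcal{F_R}(u)\le n\,\mathcal{F_R}^k-\frac{\epsilon n}{2}$.
   Context: $G=\langle V,E,w\rangle$ is a network with $n=|V|\ge k$ under the Linear Threshold or Independent Cascade model; $I_u$ is the influence spread (expected number of nodes reachable from $u$ via live edges) of node $u$. $I^k$ is the $k$-th largest value among $\{I_u:u\in V\}$. For a collection $\mathcal{R}$ of RR sets, $\mathcal{F_R}(u)$ is the fraction of RR sets in $\mathcal{R}$ containing $u$, and $\mathcal{F_R}^k$ is the $k$-th largest value among $\{\mathcal{F_R}(u):u\in V\}$. *)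

theory Defs
  imports Complex_Main "HOL-Library.Multiset"
begin

datatype diffusion_model = IC | LT

definition valid_network :: "diffusion_model \<Rightarrow> 'a set \<Rightarrow> ('a \<times> 'a) set \<Rightarrow> ('a \<times> 'a \<Rightarrow> real) \<Rightarrow> bool" where
  "valid_network m V E w \<longleftrightarrow> finite V \<and> E \<subseteq> V \<times> V \<and> (\<forall>e\<in>E. 0 \<le> w e \<and> w e \<le> 1) \<and>
     (m = LT \<longrightarrow> (\<forall>v\<in>V. (\<Sum>u\<in>{u. (u, v) \<in> E}. w (u, v)) \<le> 1))"

text \<open>IC model: each edge is live independently with probability w e.\<close>
definition ic_prob :: "('a \<times> 'a) set \<Rightarrow> ('a \<times> 'a \<Rightarrow> real) \<Rightarrow> ('a \<times> 'a) set \<Rightarrow> real" where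
  "ic_prob E w L = (\<Prod>e\<in>L. w e) * (\<Prod>e\<in>E - L. 1 - w e)"

text \<open>LT model: each node v independently picks at most one incoming edge (u,v),
  edge (u,v) with probability w(u,v), no edge with probability 1 - sum of in-weights.\<close>
definition lt_choices :: "'a set \<Rightarrow> ('a \<times> 'a) set \<Rightarrow> ('a \<Rightarrow> 'a option) set" where
  "lt_choices V E = {c. \<forall>v. (v \<notin> V \<longrightarrow> c v = None) \<and> (\<forall>u. c v = Some u \<longrightarrow> (u, v) \<in> E)}"

definition lt_edges :: "'a set \<Rightarrow> ('a \<Rightarrow> 'a option) \<Rightarrow> ('a \<times> 'a) set" where
  "lt_edges V c = {(u, v). v \<in> V \<and> c v = Some u}"

definition lt_prob :: "'a set \<Rightarrow> ('a \<times> 'a) set \<Rightarrow> ('a \<times> 'a \<Rightarrow> real) \<Rightarrow> ('a \<Rightarrow> 'a option) \<Rightarrow> real" where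
  "lt_prob V E w c = (\<Prod>v\<in>V. (case c v of
       None \<Rightarrow> 1 - (\<Sum>u\<in>{u. (u, v) \<in> E}. w (u, v))
     | Some u \<Rightarrow> w (u, v)))"

definition influence :: "diffusion_model \<Rightarrow> 'a set \<Rightarrow> ('a \<times> 'a) set \<Rightarrow> ('a \<times> 'a \<Rightarrow> real) \<Rightarrow> 'a \<Rightarrow> real" where
  "influence m V E w u = (case m of
     IC \<Rightarrow> (\<Sum>L\<in>Pow E. ic_prob E w L * real (card (L\<^sup>* `` {u})))
   | LT \<Rightarrow> (\<Sum>c\<in>lt_choices V E. lt_prob V E w c * real (card ((lt_edges V c)\<^sup>* `` {u}))))"

definition rr_sets :: "diffusion_model \<Rightarrow> 'a set \<Rightarrow> ('a \<times> 'a) set \<Rightarrow> ('a \<times> 'a \<Rightarrow> real) \<Rightarrow> 'a set set" where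
  "rr_sets m V E w = (case m of
     IC \<Rightarrow> {(L\<^sup>*)\<inverse> `` {r} | L r. r \<in> V \<and> L \<subseteq> E \<and> ic_prob E w L > 0}
   | LT \<Rightarrow> {((lt_edges V c)\<^sup>*)\<inverse> `` {r} | c r. r \<in> V \<and> c \<in> lt_choices V E \<and> lt_prob V E w c > 0})"

text \<open>F_R(u): fraction of RR sets in the collection R (a list, multiplicities allowed) containing u.\<close>
definition frac_cover :: "'a set list \<Rightarrow> 'a \<Rightarrow> real" where
  "frac_cover R u = real (length (filter (\<lambda>S. u \<in> S) R)) / real (length R)"

text \<open>k-th largest value (k \<ge> 1, counted with multiplicity) of f over the finite set V.\<close>
definition kth_largest :: "('a \<Rightarrow> real) \<Rightarrow> 'a set \<Rightarrow> nat \<Rightarrow> real" where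
  "kth_largest f V k = rev (sorted_list_of_multiset (image_mset f (mset_set V))) ! (k - 1)"

end

theory Submission
  imports Defs
begin

text \<open>The k-th largest value t of f on V is characterised by two counts: at least k nodes
  have value \<open>\<ge> t\<close>, fewer than k have value \<open>> t\<close>. Consequently, if f is pointwise below
  h \<circ> g for a monotone h, then the k-th largest value of f is below h applied to that of g.
  Both bounds of the theorem are instances of this comparison: the approximation
  \<open>\<bar>n F u - I u\<bar> \<le> \<epsilon> n / 4\<close> moves the k-th largest value by at most \<open>\<epsilon> n / 4\<close>, and
  the remaining \<open>\<epsilon> n / 4\<close> is absorbed by the margin of the hypotheses.\<close>

lemma kth_largest_sorted_list:
  fixes f :: "'a \<Rightarrow> real"
  assumes "finite V"
  defines "xs \<equiv> rev (sorted_list_of_multiset (image_mset f (mset_set V)))"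
  shows "card {u\<in>V. P (f u)} = card {i. i < length xs \<and> P (xs ! i)}"
    and "length xs = card V"
    and "sorted (rev xs)"
proof -
  have mset_xs: "mset xs = image_mset f (mset_set V)" by (simp add: xs_def)
  have "card {u\<in>V. P (f u)} = size (filter_mset P (mset xs))"
    using assms(1) by (simp add: mset_xs filter_mset_image_mset)
  also have "\<dots> = length (filter P xs)" by (metis mset_filter size_mset)
  also have "\<dots> = card {i. i < length xs \<and> P (xs ! i)}" by (rule length_filter_conv_card)
  finally show "card {u\<in>V. P (f u)} = card {i. i < length xs \<and> P (xs ! i)}" .
  show "length xs = card V" by (metis mset_xs size_image_mset size_mset size_mset_set)
  show "sorted (rev xs)" by (simp add: xs_def)
qed

lemma card_kth_largest_le:
  fixes f :: "'a \<Rightarrow> real"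
  assumes "finite V" and "1 \<le> k" "k \<le> card V"
  shows "k \<le> card {u\<in>V. kth_largest f V k \<le> f u}"
proof -
  define xs where "xs = rev (sorted_list_of_multiset (image_mset f (mset_set V)))"
  note xs = kth_largest_sorted_list[OF assms(1), where f = f, folded xs_def]
  have "{0..<k} \<subseteq> {i. i < length xs \<and> xs ! (k - 1) \<le> xs ! i}"
    using xs(2,3) assms(2,3) sorted_rev_nth_mono[of xs] by auto
  then have "k \<le> card {i. i < length xs \<and> xs ! (k - 1) \<le> xs ! i}"
    by (metis card_atLeastLessThan card_mono diff_zero finite_Collect_conjI finite_Collect_less_nat)
  then show ?thesis
    using xs(1)[where P = "\<lambda>y. xs ! (k - 1) \<le> y"] by (simp add: kth_largest_def xs_def)
qed

lemma card_kth_largest_less: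
  fixes f :: "'a \<Rightarrow> real"
  assumes "finite V" and "1 \<le> k" "k \<le> card V"
  shows "card {u\<in>V. kth_largest f V k < f u} < k"
proof -
  define xs where "xs = rev (sorted_list_of_multiset (image_mset f (mset_set V)))"
  note xs = kth_largest_sorted_list[OF assms(1), where f = f, folded xs_def]
  have "{i. i < length xs \<and> xs ! (k - 1) < xs ! i} \<subseteq> {0..<k - 1}"
  proof
    fix i assume "i \<in> {i. i < length xs \<and> xs ! (k - 1) < xs ! i}"
    then have "i < length xs" "xs ! (k - 1) < xs ! i" by auto
    then have "\<not> k - 1 \<le> i"
      using sorted_rev_nth_mono[OF xs(3), of "k - 1" i] by force
    then show "i \<in> {0..<k - 1}" by simp
  qed
  then have "card {i. i < length xs \<and> xs ! (k - 1) < xs ! i} \<le> k - 1"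
    by (metis card_atLeastLessThan card_mono diff_zero finite_atLeastLessThan)
  then show ?thesis
    using xs(1)[where P = "\<lambda>y. xs ! (k - 1) < y"] assms(2) by (simp add: kth_largest_def xs_def)
qed

lemma kth_largest_le_mono_comp:
  fixes f g :: "'a \<Rightarrow> real" and h :: "real \<Rightarrow> real"
  assumes "finite V" and "1 \<le> k" "k \<le> card V"
    and "mono h" and le: "\<forall>u\<in>V. f u \<le> h (g u)"
  shows "kth_largest f V k \<le> h (kth_largest g V k)"
proof (rule ccontr)
  assume "\<not> kth_largest f V k \<le> h (kth_largest g V k)"
  have "{u\<in>V. kth_largest f V k \<le> f u} \<subseteq> {u\<in>V. kth_largest g V k < g u}"
  proof safe
    fix u assume "u \<in> V" "kth_largest f V k \<le> f u"
    then have "h (kth_largest g V k) < h (g u)"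
      using le \<open>\<not> kth_largest f V k \<le> h (kth_largest g V k)\<close> by fastforce
    then show "kth_largest g V k < g u"
      using \<open>mono h\<close> by (meson monoD not_less)
  qed
  then have "card {u\<in>V. kth_largest f V k \<le> f u} \<le> card {u\<in>V. kth_largest g V k < g u}"
    using \<open>finite V\<close> by (intro card_mono) auto
  with card_kth_largest_le[OF assms(1-3), of f] card_kth_largest_less[OF assms(1-3), of g]
  show False by linarith
qed

theorem lemma6p1:
  fixes m :: diffusion_model and V :: "'a set" and E :: "('a \<times> 'a) set"
    and w :: "'a \<times> 'a \<Rightarrow> real" and R :: "'a set list" and \<epsilon> :: real and k :: nat
  defines "n \<equiv> real (card V)"
      and "I \<equiv> influence m V E w"
      and "F \<equiv> frac_cover R"
  assumes net: "valid_network m V E w"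
    and kn: "1 \<le> k" "k \<le> card V"
    and eps: "\<epsilon> > 0"
    and RR: "R \<noteq> []" "\<forall>S\<in>set R. S \<in> rr_sets m V E w"
    and approx: "\<forall>u\<in>V. \<bar>n * F u - I u\<bar> \<le> \<epsilon> * n / 4"
  shows "(\<forall>u\<in>V. I u \<ge> kth_largest I V k \<longrightarrow> n * F u \<ge> n * kth_largest F V k - \<epsilon> * n / 2)
       \<and> (\<forall>u\<in>V. I u \<le> kth_largest I V k - \<epsilon> * n \<longrightarrow> n * F u \<le> n * kth_largest F V k - \<epsilon> * n / 2)"
proof -
  have fin: "finite V" using net by (simp add: valid_network_def)
  have "n > 0" using kn unfolding n_def by simp
  define d where "d = \<epsilon> * n / 4"
  have close: "n * F u \<le> I u + d" "I u \<le> n * F u + d" if "u \<in> V" for u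
    using bspec[OF approx that] unfolding d_def by linarith+
  have F_le: "\<forall>u\<in>V. F u \<le> (I u + d) / n"
    using close(1) \<open>n > 0\<close> by (simp add: field_simps)
  have I_le: "\<forall>u\<in>V. I u \<le> n * F u + d"
    using close(2) by blast
  have "mono (\<lambda>x. (x + d) / n)" "mono (\<lambda>x. n * x + d)"
    using \<open>n > 0\<close> by (auto intro!: monoI divide_right_mono mult_left_mono)
  note comparison = kth_largest_le_mono_comp[OF fin kn this(1) F_le]
    kth_largest_le_mono_comp[OF fin kn this(2) I_le]
  have "kth_largest F V k \<le> (kth_largest I V k + d) / n"
    using comparison(1) by simp
  then have upper: "n * kth_largest F V k \<le> kth_largest I V k + d"
    using \<open>n > 0\<close> by (simp add: field_simps)
  have lower: "kth_largest I V k \<le> n * kth_largest F V k + d"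
    using comparison(2) by simp
  show ?thesis
  proof (intro conjI ballI impI)
    fix u assume "u \<in> V" "I u \<ge> kth_largest I V k"
    then show "n * F u \<ge> n * kth_largest F V k - \<epsilon> * n / 2"
      using close(2)[of u] upper unfolding d_def by linarith
  next
    fix u assume "u \<in> V" "I u \<le> kth_largest I V k - \<epsilon> * n"
    then show "n * F u \<le> n * kth_largest F V k - \<epsilon> * n / 2"
      using close(1)[of u] lower unfolding d_def by linarith
  qed
qed

end
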